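(* Let $W$ be a random variable with $\mathbb P(W>0)=1$, $\mathbb E[W]=1$ and $\mathbb E[W\log_2 W]<1$, let $\rho$ be the random cascade metric on $[0,1]$ built from $W$ (see context), and let $\phi(s):=s-\log_2\mathbb E[W^s]$. Then for all $x,y\in[0,1]$ and $s\in(0,1]$, $$\mathbb E[\rho(x,y)^s]\le 8\,|x-y|^{\phi(s)}.$$
   Context: For $n\ge 0$ let $\mathcal I_n$ be the set of dyadic intervals $[k2^{-n},(k+1)2^{-n}]$, $k\in\{0,\dots,2^n-1\}$, and $\mathcal I=\bigcup_n\mathcal I_n$. Let $(W_I)_{I\in\mathcal I}$ be i.i.d. copies of $W$. For $x\in[0,1]$ let $I_j(x)$ be the interval of $\mathcal I_j$ containing $x$ (if there are two, the one whose maximum is $x$). Let $\mu_0$ be Lebesgue measure on $[0,1]$ and $\mu_n:=w_n\,\mu_0$ where $w_n(x):=\prod_{j=0}^{n-1}W_{I_j(x)}$. The weak limit $\mu:=\lim_{n\to\infty}\mu_n$ exists almost surely. The random metric is $\rho(x,y):=\mu[x,y]$ for $0\le x\le y\le 1$ (and symmetrically). *)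

theory Defs
  imports "HOL-Probability.Probability"
begin

text \<open>Index k of the dyadic interval of generation j containing x in [0,1]; if x lies
  in two such intervals, the one whose maximum is x is chosen.\<close>
definition dyadic_index :: "nat \<Rightarrow> real \<Rightarrow> nat" where
  "dyadic_index j x = nat (max 0 (\<lceil>x * 2 ^ j\<rceil> - 1))"

definition cascade_weight ::
  "(nat \<times> nat \<Rightarrow> 'a \<Rightarrow> real) \<Rightarrow> nat \<Rightarrow> 'a \<Rightarrow> real \<Rightarrow> real" where
  "cascade_weight W n \<omega> x = (\<Prod>j<n. W (j, dyadic_index j x) \<omega>)"

definition cascade_measure ::
  "(nat \<times> nat \<Rightarrow> 'a \<Rightarrow> real) \<Rightarrow> nat \<Rightarrow> 'a \<Rightarrow> real measure" where
  "cascade_measure W n \<omega> =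
     density lborel (\<lambda>x. indicator {0..1} x * ennreal (cascade_weight W n \<omega> x))"

definition weak_conv_measures :: "(nat \<Rightarrow> real measure) \<Rightarrow> real measure \<Rightarrow> bool" where
  "weak_conv_measures Ms N \<longleftrightarrow>
     sets N = sets borel \<and> finite_measure N \<and>
     (\<forall>f :: real \<Rightarrow> real. continuous_on UNIV f \<and> bounded (range f) \<longrightarrow>
        (\<lambda>n. \<integral>x. f x \<partial>Ms n) \<longlonglongrightarrow> (\<integral>x. f x \<partial>N))"

end

theory Submission
  imports Defs
begin

text \<open>Let \<open>I\<close> be a dyadic interval of generation \<open>m\<close> and \<open>n \<ge> m\<close>. Then \<open>\<mu>\<^sub>n(I)\<close> is the product
  of the weights of the \<open>m\<close> ancestors of \<open>I\<close> with an average of products of later weights, which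
  is independent of those ancestors and has expectation \<open>2 powr -m\<close>. Bounding the concave
  function \<open>t powr s\<close> of that average by its tangent at \<open>2 powr -m\<close> gives
  \<open>E[\<mu>\<^sub>n(I) powr s] \<le> 2 powr (-m s) * E[W powr s] ^ m = 2 powr (-m \<phi>(s))\<close> for all \<open>n\<close>.
  If \<open>2 powr (-m - 1) < |x - y| \<le> 2 powr -m\<close>, the interval between \<open>x\<close> and \<open>y\<close> is covered by
  three such intervals, so subadditivity of \<open>t powr s\<close>, weak convergence and Fatou's lemma give
  \<open>E[\<rho>(x, y) powr s] \<le> 3 * 2 powr (-m \<phi>) \<le> 3 * 2 powr \<phi> * |x - y| powr \<phi> \<le> 8 * |x - y| powr \<phi>\<close>,
  using \<open>s \<le> \<phi>(s) \<le> 1\<close>: indeed \<open>E[W powr s] \<le> 1\<close> by concavity, and \<open>E[W powr s] \<ge> 2 powr (s - 1)\<close>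
  by Jensen's inequality and \<open>E[W log\<^sub>2 W] < 1\<close>.\<close>

section \<open>Elementary inequalities\<close>

lemma powr_le_tangent_one:
  fixes t s :: real
  assumes "0 \<le> t" "0 < s" "s \<le> 1"
  shows "t powr s \<le> 1 - s + s * t"
proof (cases "t = 0")
  case True then show ?thesis using assms by simp
next
  case False
  then have "t powr s * 1 powr (1 - s) \<le> s * t + (1 - s) * 1"
    using assms by (intro Youngs_inequality_0) auto
  then show ?thesis by simp
qed

lemma powr_le_tangent:
  fixes t h s :: real
  assumes "0 \<le> t" "0 < h" "0 < s" "s \<le> 1"
  shows "t powr s \<le> (1 - s) * h powr s + s * h powr (s - 1) * t"
proof -
  have "t powr s = h powr s * (t / h) powr s"
    using assms by (simp add: powr_divide)
  also have "\<dots> \<le> h powr s * (1 - s + s * (t / h))"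
    using assms by (intro mult_left_mono powr_le_tangent_one) auto
  also have "\<dots> = (1 - s) * h powr s + s * (h powr s / h) * t"
    by (simp add: algebra_simps)
  finally show ?thesis
    using assms by (simp add: powr_diff)
qed

lemma powr_add_le:
  fixes x y s :: real
  assumes "0 \<le> x" "0 \<le> y" "0 < s" "s \<le> 1"
  shows "(x + y) powr s \<le> x powr s + y powr s"
proof (cases "x + y = 0")
  case True then show ?thesis using assms by auto
next
  case False
  then have xy: "x + y > 0" using assms by auto
  have le_powr: "u \<le> u powr s" if "0 \<le> u" "u \<le> 1" for u :: real
  proof -
    have "u powr 1 \<le> u powr s"
      using that assms by (intro powr_mono') auto
    then show ?thesis using that by simp
  qed
  have "1 = x / (x + y) + y / (x + y)"
    using xy by (simp add: add_divide_distrib[symmetric])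
  also have "\<dots> \<le> (x / (x + y)) powr s + (y / (x + y)) powr s"
    using assms xy by (intro add_mono le_powr) auto
  also have "\<dots> = (x powr s + y powr s) / (x + y) powr s"
    using assms xy by (simp add: powr_divide add_divide_distrib)
  finally show ?thesis using xy by (simp add: field_simps)
qed

lemma powr_sum_le:
  fixes f :: "'b \<Rightarrow> real"
  assumes "\<And>j. j \<in> J \<Longrightarrow> 0 \<le> f j" "0 < s" "s \<le> 1"
  shows "(\<Sum>j\<in>J. f j) powr s \<le> (\<Sum>j\<in>J. f j powr s)"
  using assms
proof (induction J rule: infinite_finite_induct)
  case (insert a F)
  have "(\<Sum>j\<in>insert a F. f j) powr s \<le> f a powr s + (\<Sum>j\<in>F. f j) powr s"
    using insert by (auto intro: powr_add_le sum_nonneg)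
  then show ?case using insert by simp
qed simp_all

lemma inverse_power2_eq_powr: "1 / (2::real) ^ m = 2 powr (- real m)"
  by (simp add: powr_minus_divide powr_realpow)

lemma powr_mult_power_eq_powr:
  fixes E s :: real
  assumes "0 < E"
  shows "(1 / 2 ^ m) powr s * E ^ m = (1 / 2 ^ m) powr (s - log 2 E)"
proof -
  have "E ^ m = 2 powr (log 2 E * real m)"
    using assms by (simp add: powr_powr[symmetric] powr_realpow)
  then have "(1 / 2 ^ m) powr s * E ^ m = 2 powr (- real m * s) * 2 powr (log 2 E * real m)"
    unfolding inverse_power2_eq_powr powr_powr by simp
  also have "\<dots> = 2 powr (- real m * (s - log 2 E))"
    by (simp add: powr_add[symmetric] algebra_simps)
  finally show ?thesis
    unfolding inverse_power2_eq_powr powr_powr .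
qed

lemma dyadic_scale_bound:
  fixes V :: ennreal and d \<phi> :: real
  assumes d: "0 \<le> d" "d \<le> 1" and \<phi>: "0 < \<phi>" "\<phi> \<le> 1"
    and V: "\<And>m :: nat. d \<le> 1 / 2 ^ m \<Longrightarrow> V \<le> ennreal (3 * (1 / 2 ^ m) powr \<phi>)"
  shows "V \<le> ennreal (8 * d powr \<phi>)"
proof (cases "d = 0")
  case True
  have "V \<le> ennreal (3 * (2 powr - \<phi>) ^ m)" for m
  proof -
    have "(2 powr - \<phi>) ^ m = 2 powr (- real m * \<phi>)"
      by (simp add: powr_realpow[symmetric] powr_powr mult.commute)
    also have "\<dots> = (1 / 2 ^ m) powr \<phi>"
      unfolding inverse_power2_eq_powr powr_powr by (simp add: mult.commute)
    finally show ?thesis using V[of m] True by simp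
  qed
  moreover have "(\<lambda>m. ennreal (3 * (2 powr - \<phi>) ^ m)) \<longlonglongrightarrow> ennreal 0"
    using \<phi> by (intro tendsto_ennrealI tendsto_mult_right_zero LIMSEQ_power_zero) (auto intro: powr_less_one)
  ultimately have "V \<le> 0"
    by (intro LIMSEQ_le_const[of "\<lambda>m. ennreal (3 * (2 powr - \<phi>) ^ m)"]) auto
  then show ?thesis by simp
next
  case False
  define m where "m = nat \<lfloor>- log 2 d\<rfloor>"
  have "0 \<le> - log 2 d"
    using d False by simp
  then have "real m \<le> - log 2 d" "- log 2 d < real m + 1"
    by (auto simp: m_def)
  then have "2 powr real m \<le> 2 powr (- log 2 d)" "2 powr (- log 2 d) < 2 powr (real m + 1)"
    by simp_all
  then have "2 ^ m \<le> 1 / d" "1 / d < 2 ^ m * 2"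
    using d False by (simp_all add: powr_minus powr_add powr_realpow divide_inverse)
  then have dm: "d \<le> 1 / 2 ^ m" "1 / 2 ^ m < 2 * d"
    using d False by (simp_all add: field_simps)
  have "3 * (1 / 2 ^ m) powr \<phi> \<le> 3 * (2 * d) powr \<phi>"
    using dm \<phi> by (intro mult_left_mono powr_mono2) auto
  also have "\<dots> = 3 * 2 powr \<phi> * d powr \<phi>"
    using d by (simp add: powr_mult)
  also have "\<dots> \<le> 8 * d powr \<phi>"
    using powr_mono[of \<phi> 1 2] \<phi> by (intro mult_right_mono) auto
  finally show ?thesis
    using V[OF dm(1)] by (meson ennreal_leI order_trans)
qed

section \<open>Dyadic intervals\<close>

lemma dyadic_index_bounds:
  fixes t :: real
  assumes "0 < t"
  shows "real (dyadic_index n t) < t * 2 ^ n" "t * 2 ^ n \<le> real (dyadic_index n t) + 1"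
proof -
  have "1 \<le> \<lceil>t * 2 ^ n\<rceil>"
    using assms by (simp add: zero_less_ceiling)
  then have "real (dyadic_index n t) = real_of_int \<lceil>t * 2 ^ n\<rceil> - 1"
    by (simp add: dyadic_index_def)
  then show "real (dyadic_index n t) < t * 2 ^ n" "t * 2 ^ n \<le> real (dyadic_index n t) + 1"
    by linarith+
qed

lemma dyadic_index_eq:
  fixes t :: real
  assumes "real K / 2 ^ n < t" "t \<le> real (K + 1) / 2 ^ n" "i \<le> n"
  shows "dyadic_index i t = K div 2 ^ (n - i)"
proof -
  define q :: nat where "q = 2 ^ (n - i)"
  define j where "j = K div q"
  have q: "q > 0" by (simp add: q_def)
  have n: "(2::real) ^ n = 2 ^ i * real q"
    using assms(3) by (simp add: q_def power_add[symmetric])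
  define u where "u = t * 2 ^ i"
  have "j * q \<le> K" "K + 1 \<le> q + j * q"
    using dividend_less_div_times[OF q, of K] by (simp_all add: j_def)
  then have "real (j * q) \<le> real K" "real (K + 1) \<le> real (q + j * q)"
    by (simp_all only: of_nat_le_iff)
  then have jK: "real j * real q \<le> real K" "real K + 1 \<le> real q + real j * real q"
    by simp_all
  have Ku: "real K < u * real q" "u * real q \<le> real K + 1"
    using assms(1,2) n q by (simp_all add: u_def field_simps)
  have "real j * real q < u * real q" "u * real q \<le> (real j + 1) * real q"
    using jK Ku unfolding distrib_right by linarith+
  then have "real j < u" "u \<le> real j + 1"
    using q by (auto dest: mult_right_less_imp_less mult_right_le_imp_le)
  then have "\<lceil>t * 2 ^ i\<rceil> = int j + 1"
    unfolding u_def by (intro ceiling_unique) auto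
  then show ?thesis
    by (simp add: dyadic_index_def j_def q_def mult.commute)
qed

lemma div_power2_less: "K < 2 ^ n \<Longrightarrow> i \<le> n \<Longrightarrow> K div 2 ^ (n - i) < (2::nat) ^ i"
  by (metis less_mult_imp_div_less power_add le_add_diff_inverse mult.commute)

lemma block_less:
  assumes "K \<in> {j * 2 ^ (n - m)..<(j + 1) * 2 ^ (n - m)}" "j < 2 ^ m" "m \<le> n"
  shows "K < (2::nat) ^ n"
proof -
  have "K < (j + 1) * 2 ^ (n - m)" using assms by simp
  also have "\<dots> \<le> 2 ^ m * 2 ^ (n - m)" using assms by (intro mult_right_mono) auto
  also have "\<dots> = 2 ^ n" using assms by (simp add: power_add[symmetric])
  finally show ?thesis .
qed

lemma block_ancestor:
  assumes "K \<in> {j * 2 ^ (n - m)..<(j + 1) * 2 ^ (n - m)}" "i \<le> m" "m \<le> n"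
  shows "K div 2 ^ (n - i) = j div (2::nat) ^ (m - i)"
proof -
  have "K div 2 ^ (n - m) = j"
    using assms(1) by (auto intro!: div_nat_eqI simp: algebra_simps)
  moreover have "(2::nat) ^ (n - i) = 2 ^ (n - m) * 2 ^ (m - i)"
    using assms(2,3) by (simp add: power_add[symmetric])
  ultimately show ?thesis by (simp add: div_mult2_eq)
qed

lemma sum_atLeastLessThan_group:
  fixes g :: "nat \<Rightarrow> 'b::comm_monoid_add"
  assumes "a \<le> b"
  shows "(\<Sum>K\<in>{a * q..<b * q}. g K) = (\<Sum>j\<in>{a..<b}. \<Sum>K\<in>{j * q..<(j + 1) * q}. g K)"
  using assms
proof (induction b)
  case (Suc b)
  show ?case
  proof (cases "a = Suc b")
    case False
    then have ab: "a \<le> b" using Suc by simp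
    have "(\<Sum>K\<in>{a * q..<(b + 1) * q}. g K) = (\<Sum>K\<in>{a * q..<b * q}. g K) + (\<Sum>K\<in>{b * q..<(b + 1) * q}. g K)"
      using ab by (intro sum.atLeastLessThan_concat[symmetric]) (auto intro: mult_right_mono)
    then show ?thesis using Suc.IH[OF ab] ab by simp
  qed simp
qed simp

text \<open>For \<open>m \<le> n\<close>, \<open>block_mass V m n j\<close> is the mass of the \<open>j\<close>-th dyadic interval of
  generation \<open>m\<close> under the density \<open>\<Prod>i<n. V (i, I\<^sub>i(t))\<close>: that density is constant on each
  generation-\<open>n\<close> interval \<open>[K 2\<^sup>-\<^sup>n, (K + 1) 2\<^sup>-\<^sup>n]\<close>, whose ancestor of generation \<open>i\<close> is
  \<open>K div 2\<^bsup>n - i\<^esup>\<close>.\<close>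
definition block_mass :: "(nat \<times> nat \<Rightarrow> real) \<Rightarrow> nat \<Rightarrow> nat \<Rightarrow> nat \<Rightarrow> real" where
  "block_mass V m n j =
     (\<Sum>K\<in>{j * 2 ^ (n - m)..<(j + 1) * 2 ^ (n - m)}. (\<Prod>i<n. V (i, K div 2 ^ (n - i))) / 2 ^ n)"

lemma block_mass_nonneg:
  assumes "\<And>i k. k < 2 ^ i \<Longrightarrow> 0 \<le> V (i, k)" "j < 2 ^ m" "m \<le> n"
  shows "0 \<le> block_mass V m n j"
  unfolding block_mass_def
proof (intro sum_nonneg divide_nonneg_nonneg prod_nonneg)
  fix K i
  assume "K \<in> {j * 2 ^ (n - m)..<(j + 1) * 2 ^ (n - m)}" "i \<in> {..<n}"
  then have "K div 2 ^ (n - i) < 2 ^ i"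
    using block_less[OF _ assms(2,3)] div_power2_less by auto
  then show "0 \<le> V (i, K div 2 ^ (n - i))" by (rule assms(1))
qed simp

lemma nn_integral_dyadic_product_le:
  fixes V :: "nat \<times> nat \<Rightarrow> real"
  assumes "\<alpha> \<le> \<beta>"
  shows "(\<integral>\<^sup>+t. indicator {real \<alpha> / 2 ^ n..real \<beta> / 2 ^ n} t *
            ennreal (\<Prod>i<n. V (i, dyadic_index i t)) \<partial>lborel)
         \<le> (\<Sum>K\<in>{\<alpha>..<\<beta>}. ennreal ((\<Prod>i<n. V (i, K div 2 ^ (n - i))) / 2 ^ n))"
proof -
  define P where "P K = (\<Prod>i<n. V (i, K div 2 ^ (n - i)))" for K
  define I where "I K = {real K / 2 ^ n<..real (K + 1) / 2 ^ n}" for K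
  have pointwise: "indicator {real \<alpha> / 2 ^ n..real \<beta> / 2 ^ n} t * ennreal (\<Prod>i<n. V (i, dyadic_index i t))
      \<le> (\<Sum>K\<in>{\<alpha>..<\<beta>}. ennreal (P K) * indicator (I K) t)"
    if "t \<noteq> real \<alpha> / 2 ^ n" for t
  proof (cases "t \<in> {real \<alpha> / 2 ^ n..real \<beta> / 2 ^ n}")
    case True
    define K where "K = dyadic_index n t"
    have t: "real \<alpha> < t * 2 ^ n" "t * 2 ^ n \<le> real \<beta>"
      using True that by (auto simp: field_simps)
    then have "0 < t * 2 ^ n"
      using of_nat_0_le_iff[of \<alpha>] by linarith
    then have "0 < t"
      by (simp add: zero_less_mult_iff)
    from dyadic_index_bounds[OF this, of n] have K: "real K < t * 2 ^ n" "t * 2 ^ n \<le> real K + 1"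
      by (simp_all add: K_def)
    then have "K \<in> {\<alpha>..<\<beta>}"
      using t by auto
    have tK: "t \<in> I K"
      using K by (simp add: I_def field_simps)
    moreover have "(\<Prod>i<n. V (i, dyadic_index i t)) = P K"
      unfolding P_def using tK dyadic_index_eq[of K n t] by (intro prod.cong) (auto simp: I_def)
    ultimately have "indicator {real \<alpha> / 2 ^ n..real \<beta> / 2 ^ n} t * ennreal (\<Prod>i<n. V (i, dyadic_index i t))
        = ennreal (P K) * indicator (I K) t"
      using True by simp
    also have "\<dots> \<le> (\<Sum>K\<in>{\<alpha>..<\<beta>}. ennreal (P K) * indicator (I K) t)"
      using \<open>K \<in> {\<alpha>..<\<beta>}\<close> by (intro member_le_sum) auto
    finally show ?thesis .
  qed simp
  have "(\<integral>\<^sup>+t. indicator {real \<alpha> / 2 ^ n..real \<beta> / 2 ^ n} t *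
            ennreal (\<Prod>i<n. V (i, dyadic_index i t)) \<partial>lborel)
     \<le> (\<integral>\<^sup>+t. (\<Sum>K\<in>{\<alpha>..<\<beta>}. ennreal (P K) * indicator (I K) t) \<partial>lborel)"
    by (intro nn_integral_mono_AE eventually_mono[OF AE_lborel_singleton[of "real \<alpha> / 2 ^ n"]] pointwise)
  also have "\<dots> = (\<Sum>K\<in>{\<alpha>..<\<beta>}. \<integral>\<^sup>+t. ennreal (P K) * indicator (I K) t \<partial>lborel)"
    by (intro nn_integral_sum) (simp add: I_def)
  also have "\<dots> = (\<Sum>K\<in>{\<alpha>..<\<beta>}. ennreal (P K) * ennreal (1 / 2 ^ n))"
  proof (intro sum.cong refl)
    fix K
    have "emeasure lborel (I K) = ennreal (real (K + 1) / 2 ^ n - real K / 2 ^ n)"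
      unfolding I_def by (intro emeasure_lborel_Ioc) (simp add: divide_right_mono)
    also have "\<dots> = ennreal (1 / 2 ^ n)"
      by (simp add: diff_divide_distrib[symmetric])
    finally show "(\<integral>\<^sup>+t. ennreal (P K) * indicator (I K) t \<partial>lborel) = ennreal (P K) * ennreal (1 / 2 ^ n)"
      by (simp add: nn_integral_cmult_indicator I_def)
  qed
  also have "\<dots> = (\<Sum>K\<in>{\<alpha>..<\<beta>}. ennreal (P K / 2 ^ n))"
  proof (intro sum.cong refl)
    fix K
    show "ennreal (P K) * ennreal (1 / 2 ^ n) = ennreal (P K / 2 ^ n)"
    proof (cases "0 \<le> P K")
      case False
      then have "P K / 2 ^ n \<le> 0" by (simp add: divide_nonpos_pos)
      with False show ?thesis by (simp add: ennreal_neg)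
    qed (simp add: ennreal_mult[symmetric])
  qed
  finally show ?thesis by (simp add: P_def)
qed

text \<open>The first \<open>m\<close> factors of the density are common to the whole block; the block mass
  is linearised in the remaining factors by the tangent of \<open>t \<mapsto> t powr s\<close> at \<open>2\<^sup>-\<^sup>m\<close>,
  which is the expected value of that remaining average.\<close>
lemma block_mass_powr_le:
  fixes V :: "nat \<times> nat \<Rightarrow> real"
  assumes mn: "m \<le> n" and j: "j < 2 ^ m" and s: "0 < s" "s \<le> 1"
    and V: "\<And>i k. k < 2 ^ i \<Longrightarrow> 0 < V (i, k)"
  shows "block_mass V m n j powr s \<le>
      (1 - s) * (1 / 2 ^ m) powr s * (\<Prod>i<m. V (i, j div 2 ^ (m - i)) powr s)
    + s * (1 / 2 ^ m) powr (s - 1) / 2 ^ n *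
      (\<Sum>K\<in>{j * 2 ^ (n - m)..<(j + 1) * 2 ^ (n - m)}.
         \<Prod>i<n. if i < m then V (i, K div 2 ^ (n - i)) powr s else V (i, K div 2 ^ (n - i)))"
    (is "_ \<le> _ + _ * (\<Sum>K\<in>?B. ?G K)")
proof -
  define X where "X = (\<Prod>i<m. V (i, j div 2 ^ (m - i)))"
  define Y where "Y K = (\<Prod>i\<in>{m..<n}. V (i, K div 2 ^ (n - i)))" for K
  have split: "{..<n} = {..<m} \<union> {m..<n}" "{..<m} \<inter> {m..<n} = {}"
    using mn by auto
  have V_block: "0 < V (i, K div 2 ^ (n - i))" if "K \<in> ?B" "i < n" for K i
    using that block_less[OF that(1) j mn] by (intro V div_power2_less) auto
  have Y_nonneg: "0 \<le> Y K" if "K \<in> ?B" for K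
    unfolding Y_def using V_block[OF that] by (intro prod_nonneg) (auto intro: less_imp_le)
  have prefix: "(\<Prod>i<m. f (V (i, K div 2 ^ (n - i)))) = (\<Prod>i<m. f (V (i, j div 2 ^ (m - i))))"
    if "K \<in> ?B" for K and f :: "real \<Rightarrow> real"
    using block_ancestor[OF that _ mn] by (intro prod.cong) auto
  have mass: "block_mass V m n j = X * (\<Sum>K\<in>?B. Y K / 2 ^ n)"
    unfolding block_mass_def sum_distrib_left
  proof (intro sum.cong refl)
    fix K assume "K \<in> ?B"
    then show "(\<Prod>i<n. V (i, K div 2 ^ (n - i))) / 2 ^ n = X * (Y K / 2 ^ n)"
      unfolding split(1) prod.union_disjoint[OF _ _ split(2), simplified]
      using prefix[where f = id] by (simp add: X_def Y_def)
  qed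
  have G: "?G K = X powr s * Y K" if "K \<in> ?B" for K
  proof -
    have "?G K = (\<Prod>i<m. V (i, K div 2 ^ (n - i)) powr s) * Y K"
      unfolding split(1) prod.union_disjoint[OF _ _ split(2), simplified] Y_def
      by (intro arg_cong2[where f = times] prod.cong) auto
    then show ?thesis
      using prefix[OF that, where f = "\<lambda>t. t powr s"] by (simp add: X_def prod_powr_distrib)
  qed
  have "block_mass V m n j powr s = X powr s * (\<Sum>K\<in>?B. Y K / 2 ^ n) powr s"
    by (simp add: mass powr_mult)
  also have "\<dots> \<le> X powr s * ((1 - s) * (1 / 2 ^ m) powr s
      + s * (1 / 2 ^ m) powr (s - 1) * (\<Sum>K\<in>?B. Y K / 2 ^ n))"
    using s Y_nonneg by (intro mult_left_mono powr_le_tangent sum_nonneg) auto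
  also have "\<dots> = (1 - s) * (1 / 2 ^ m) powr s * X powr s
      + s * (1 / 2 ^ m) powr (s - 1) / 2 ^ n * (\<Sum>K\<in>?B. X powr s * Y K)"
    by (simp add: algebra_simps sum_distrib_left sum_divide_distrib)
  also have "\<dots> = (1 - s) * (1 / 2 ^ m) powr s * (\<Prod>i<m. V (i, j div 2 ^ (m - i)) powr s)
      + s * (1 / 2 ^ m) powr (s - 1) / 2 ^ n * (\<Sum>K\<in>?B. ?G K)"
    using G by (simp add: X_def prod_powr_distrib)
  finally show ?thesis .
qed

section \<open>Moments of the cascade\<close>

locale cascade_weights = prob_space M for M :: "'a measure" +
  fixes W0 :: "'a \<Rightarrow> real" and W :: "nat \<times> nat \<Rightarrow> 'a \<Rightarrow> real"
  assumes W0_measurable: "W0 \<in> borel_measurable M"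
    and indep_W: "indep_vars (\<lambda>_. borel) W {(n, k). k < 2 ^ n}"
    and distr_W: "\<And>n k. k < 2 ^ n \<Longrightarrow> distr M borel (W (n, k)) = distr M borel W0"
    and W0_pos: "AE \<omega> in M. W0 \<omega> > 0"
    and integrable_W0: "integrable M W0"
    and expectation_W0: "(\<integral>\<omega>. W0 \<omega> \<partial>M) = 1"
begin

lemma W_measurable: "k < 2 ^ n \<Longrightarrow> W (n, k) \<in> borel_measurable M"
  using indep_W unfolding indep_vars_def by auto

lemma nn_integral_W:
  assumes "k < 2 ^ n" "g \<in> borel_measurable borel"
  shows "(\<integral>\<^sup>+\<omega>. g (W (n, k) \<omega>) \<partial>M) = (\<integral>\<^sup>+\<omega>. g (W0 \<omega>) \<partial>M)"
proof -
  have "(\<integral>\<^sup>+\<omega>. g (W (n, k) \<omega>) \<partial>M) = (\<integral>\<^sup>+x. g x \<partial>distr M borel (W (n, k)))"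
    using assms W_measurable by (subst nn_integral_distr) auto
  also have "\<dots> = (\<integral>\<^sup>+\<omega>. g (W0 \<omega>) \<partial>M)"
    using assms W0_measurable by (simp add: distr_W nn_integral_distr)
  finally show ?thesis .
qed

lemma AE_W_pos: "AE \<omega> in M. \<forall>n k. k < 2 ^ n \<longrightarrow> W (n, k) \<omega> > 0"
proof -
  have "AE \<omega> in M. W (n, k) \<omega> > 0" if "k < 2 ^ n" for n k
  proof -
    have "AE x in distr M borel W0. x > 0"
      using W0_pos W0_measurable by (subst AE_distr_iff) auto
    then show ?thesis
      unfolding distr_W[OF that, symmetric] by (rule AE_distrD[OF W_measurable[OF that]])
  qed
  then have "AE \<omega> in M. \<forall>p::nat \<times> nat. snd p < 2 ^ fst p \<longrightarrow> W p \<omega> > 0"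
    by (subst AE_all_countable) auto
  then show ?thesis
    by (rule eventually_mono) auto
qed

lemma nn_integral_prod_W:
  fixes g :: "nat \<Rightarrow> real \<Rightarrow> ennreal" and c :: "nat \<Rightarrow> nat"
  assumes c: "\<And>i. i < n \<Longrightarrow> c i < 2 ^ i" and g: "\<And>i. g i \<in> borel_measurable borel"
  shows "(\<integral>\<^sup>+\<omega>. (\<Prod>i<n. g i (W (i, c i) \<omega>)) \<partial>M) = (\<Prod>i<n. \<integral>\<^sup>+\<omega>. g i (W0 \<omega>) \<partial>M)"
proof -
  define I where "I = (\<lambda>i. (i, c i)) ` {..<n}"
  have inj: "inj_on (\<lambda>i. (i, c i)) {..<n}"
    by (auto simp: inj_on_def)
  have "I \<subseteq> {(n, k). k < 2 ^ n}"
    using c by (auto simp: I_def)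
  then have indep: "indep_vars (\<lambda>_. borel) (\<lambda>p \<omega>. g (fst p) (W p \<omega>)) I"
    using g by (intro indep_vars_compose2[OF indep_vars_subset[OF indep_W]]) auto
  have "(\<integral>\<^sup>+\<omega>. (\<Prod>i<n. g i (W (i, c i) \<omega>)) \<partial>M) = (\<integral>\<^sup>+\<omega>. (\<Prod>p\<in>I. g (fst p) (W p \<omega>)) \<partial>M)"
    unfolding I_def by (simp add: prod.reindex[OF inj])
  also have "\<dots> = (\<Prod>p\<in>I. \<integral>\<^sup>+\<omega>. g (fst p) (W p \<omega>) \<partial>M)"
    by (rule indep_vars_nn_integral[OF _ indep]) (auto simp: I_def)
  also have "\<dots> = (\<Prod>i<n. \<integral>\<^sup>+\<omega>. g i (W (i, c i) \<omega>) \<partial>M)"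
    unfolding I_def by (simp add: prod.reindex[OF inj])
  also have "\<dots> = (\<Prod>i<n. \<integral>\<^sup>+\<omega>. g i (W0 \<omega>) \<partial>M)"
    using c g by (intro prod.cong refl nn_integral_W) auto
  finally show ?thesis .
qed

lemma integrable_W0_powr:
  assumes "0 < s" "s \<le> 1"
  shows "integrable M (\<lambda>\<omega>. W0 \<omega> powr s)"
proof (rule Bochner_Integration.integrable_bound[of _ "\<lambda>\<omega>. 1 + W0 \<omega>"])
  show "integrable M (\<lambda>\<omega>. 1 + W0 \<omega>)"
    using integrable_W0 by auto
  show "(\<lambda>\<omega>. W0 \<omega> powr s) \<in> borel_measurable M"
    using W0_measurable by measurable
  show "AE \<omega> in M. norm (W0 \<omega> powr s) \<le> norm (1 + W0 \<omega>)"
  proof (rule eventually_mono[OF W0_pos])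
    fix \<omega> assume pos: "W0 \<omega> > 0"
    have "W0 \<omega> powr s \<le> 1 - s + s * W0 \<omega>"
      using pos assms by (intro powr_le_tangent_one) auto
    also have "\<dots> \<le> 1 + W0 \<omega>"
      using pos assms mult_left_le_one_le[of "W0 \<omega>" s] by linarith
    finally show "norm (W0 \<omega> powr s) \<le> norm (1 + W0 \<omega>)"
      using pos by simp
  qed
qed

lemma nn_integral_prod_W_powr:
  fixes c :: "nat \<Rightarrow> nat"
  assumes c: "\<And>i. i < n \<Longrightarrow> c i < 2 ^ i" and "m \<le> n" and s: "0 < s" "s \<le> 1"
  shows "(\<integral>\<^sup>+\<omega>. (\<Prod>i<n. ennreal (if i < m then W (i, c i) \<omega> powr s else W (i, c i) \<omega>)) \<partial>M)
     = ennreal (\<integral>\<omega>. W0 \<omega> powr s \<partial>M) ^ m"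
proof -
  have "(\<integral>\<^sup>+\<omega>. ennreal (W0 \<omega>) \<partial>M) = 1"
    using integrable_W0 expectation_W0 W0_pos
    by (subst nn_integral_eq_integral) (auto elim: eventually_mono)
  moreover have "(\<integral>\<^sup>+\<omega>. ennreal (W0 \<omega> powr s) \<partial>M) = ennreal (\<integral>\<omega>. W0 \<omega> powr s \<partial>M)"
    using integrable_W0_powr[OF s] by (subst nn_integral_eq_integral) auto
  ultimately have "(\<integral>\<^sup>+\<omega>. (\<Prod>i<n. ennreal (if i < m then W (i, c i) \<omega> powr s else W (i, c i) \<omega>)) \<partial>M)
      = (\<Prod>i<n. if i < m then ennreal (\<integral>\<omega>. W0 \<omega> powr s \<partial>M) else 1)"
    by (subst nn_integral_prod_W[where g = "\<lambda>i t. ennreal (if i < m then t powr s else t)", OF c])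
      (auto intro!: prod.cong)
  also have "\<dots> = ennreal (\<integral>\<omega>. W0 \<omega> powr s \<partial>M) ^ m"
  proof -
    have "{..<n} \<inter> {i. i < m} = {..<m}"
      using \<open>m \<le> n\<close> by auto
    then show ?thesis by (simp add: prod.If_cases)
  qed
  finally show ?thesis .
qed

lemma moment_W0_powr_le_one:
  assumes s: "0 < s" "s \<le> 1"
  shows "(\<integral>\<omega>. W0 \<omega> powr s \<partial>M) \<le> 1"
proof -
  have "(\<integral>\<omega>. W0 \<omega> powr s \<partial>M) \<le> (\<integral>\<omega>. 1 - s + s * W0 \<omega> \<partial>M)"
    using integrable_W0_powr[OF s] integrable_W0 s
    by (intro integral_mono_AE eventually_mono[OF W0_pos] powr_le_tangent_one) auto
  also have "\<dots> = 1"
    using integrable_W0 expectation_W0 by (simp add: prob_space)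
  finally show ?thesis .
qed

text \<open>Jensen's inequality for the size-biased law \<open>W0 \<cdot> M\<close> and the convex function \<open>exp\<close>
  gives \<open>E[W0 powr s] \<ge> exp ((s - 1) E[W0 ln W0])\<close>; it is obtained here by integrating the
  tangent of \<open>exp\<close> at that exponent.\<close>
lemma moment_W0_powr_ge:
  assumes s: "0 < s" "s \<le> 1"
    and integrable_entropy: "integrable M (\<lambda>\<omega>. W0 \<omega> * log 2 (W0 \<omega>))"
    and entropy_less: "(\<integral>\<omega>. W0 \<omega> * log 2 (W0 \<omega>) \<partial>M) < 1"
  shows "2 powr (s - 1) \<le> (\<integral>\<omega>. W0 \<omega> powr s \<partial>M)"
proof -
  define a where "a = (\<integral>\<omega>. W0 \<omega> * log 2 (W0 \<omega>) \<partial>M)"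
  define k where "k = (s - 1) * ln 2"
  define c where "c = k * a"
  have tangent: "exp c * (t + k * (t * log 2 t) - c * t) \<le> t powr s" if t: "t > 0" for t
  proof -
    have entropy: "k * (t * log 2 t) = t * ((s - 1) * ln t)"
      by (simp add: k_def log_def)
    have "exp c * (t + k * (t * log 2 t) - c * t) = t * (exp c * (1 + ((s - 1) * ln t - c)))"
      unfolding entropy by (simp add: algebra_simps)
    also have "\<dots> \<le> t * (exp c * exp ((s - 1) * ln t - c))"
      using t by (intro mult_left_mono exp_ge_add_one_self) auto
    also have "\<dots> = t * t powr (s - 1)"
      using t by (simp add: exp_diff powr_def)
    also have "\<dots> = t powr s"
      using t by (simp add: powr_mult_base)
    finally show ?thesis .
  qed
  have "exp c = (\<integral>\<omega>. exp c * (W0 \<omega> + k * (W0 \<omega> * log 2 (W0 \<omega>)) - c * W0 \<omega>) \<partial>M)"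
    using integrable_W0 integrable_entropy expectation_W0 by (simp add: a_def c_def)
  also have "\<dots> \<le> (\<integral>\<omega>. W0 \<omega> powr s \<partial>M)"
    using integrable_W0_powr[OF s] integrable_W0 integrable_entropy
    by (intro integral_mono_AE eventually_mono[OF W0_pos] tangent) auto
  finally have "exp c \<le> (\<integral>\<omega>. W0 \<omega> powr s \<partial>M)" .
  moreover have "2 powr (s - 1) \<le> exp c"
  proof -
    have "s - 1 \<le> (s - 1) * a"
      using s entropy_less unfolding a_def by (simp add: mult_le_cancel_left1)
    then have "2 powr (s - 1) \<le> 2 powr ((s - 1) * a)"
      by simp
    also have "\<dots> = exp c"
      by (simp add: powr_def c_def k_def algebra_simps)
    finally show ?thesis .
  qed
  ultimately show ?thesis by linarith
qed

end

context cascade_weights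
begin

lemma block_mass_measurable:
  assumes "m \<le> n" "j < 2 ^ m"
  shows "(\<lambda>\<omega>. block_mass (\<lambda>p. W p \<omega>) m n j) \<in> borel_measurable M"
  unfolding block_mass_def
proof (intro borel_measurable_sum borel_measurable_divide borel_measurable_prod borel_measurable_const)
  fix K i assume "K \<in> {j * 2 ^ (n - m)..<(j + 1) * 2 ^ (n - m)}" "i \<in> {..<n}"
  then show "W (i, K div 2 ^ (n - i)) \<in> borel_measurable M"
    using block_less[OF _ assms(2,1)] by (intro W_measurable div_power2_less) auto
qed

lemma nn_integral_block_mass_powr:
  assumes mn: "m \<le> n" and j: "j < 2 ^ m" and s: "0 < s" "s \<le> 1"
  shows "(\<integral>\<^sup>+\<omega>. ennreal (block_mass (\<lambda>p. W p \<omega>) m n j powr s) \<partial>M)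
    \<le> ennreal ((1 / 2 ^ m) powr s * (\<integral>\<omega>. W0 \<omega> powr s \<partial>M) ^ m)"
proof -
  define B where "B = {j * 2 ^ (n - m)..<(j + 1) * 2 ^ (n - m)}"
  define Es where "Es = (\<integral>\<omega>. W0 \<omega> powr s \<partial>M)"
  define a :: real where "a = (1 - s) * (1 / 2 ^ m) powr s"
  define b :: real where "b = s * (1 / 2 ^ m) powr (s - 1) / 2 ^ n"
  define P where "P c k \<omega> = (\<Prod>i<k. if i < m then W (i, c i) \<omega> powr s else W (i, c i) \<omega>)"
    for c :: "nat \<Rightarrow> nat" and k \<omega>
  define F where "F c k \<omega> = (\<Prod>i<k. ennreal (if i < m then W (i, c i) \<omega> powr s else W (i, c i) \<omega>))"
    for c :: "nat \<Rightarrow> nat" and k \<omega>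
  have ab: "0 \<le> a" "0 \<le> b"
    using s by (simp_all add: a_def b_def)
  have prefix: "j div 2 ^ (m - i) < 2 ^ i" if "i < m" for i
    using j that by (intro div_power2_less) auto
  have block: "K div 2 ^ (n - i) < 2 ^ i" if "K \<in> B" "i < n" for K i
    using block_less[OF that(1)[unfolded B_def] j mn] that by (intro div_power2_less) auto
  have F_measurable: "(\<lambda>\<omega>. F c k \<omega>) \<in> borel_measurable M"
    if "\<And>i. i < k \<Longrightarrow> c i < 2 ^ i" for c k
    unfolding F_def
  proof (rule borel_measurable_prod_ennreal)
    fix i assume "i \<in> {..<k}"
    then have "W (i, c i) \<in> borel_measurable M"
      using that W_measurable by auto
    then show "(\<lambda>\<omega>. ennreal (if i < m then W (i, c i) \<omega> powr s else W (i, c i) \<omega>)) \<in> borel_measurable M"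
      by measurable
  qed
  have F_integral: "(\<integral>\<^sup>+\<omega>. F c k \<omega> \<partial>M) = ennreal Es ^ m"
    if "\<And>i. i < k \<Longrightarrow> c i < 2 ^ i" "m \<le> k" for c k
    unfolding F_def Es_def using that s by (rule nn_integral_prod_W_powr)
  have bound: "AE \<omega> in M. ennreal (block_mass (\<lambda>p. W p \<omega>) m n j powr s)
      \<le> ennreal a * F (\<lambda>i. j div 2 ^ (m - i)) m \<omega> + ennreal b * (\<Sum>K\<in>B. F (\<lambda>i. K div 2 ^ (n - i)) n \<omega>)"
  proof (rule eventually_mono[OF AE_W_pos])
    fix \<omega> assume pos: "\<forall>n k. k < 2 ^ n \<longrightarrow> 0 < W (n, k) \<omega>"
    then have P_nonneg: "0 \<le> P c k \<omega>" if "\<And>i. i < k \<Longrightarrow> c i < 2 ^ i" for c k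
      unfolding P_def using that by (intro prod_nonneg) (auto intro: less_imp_le)
    have ennreal_P: "ennreal (P c k \<omega>) = F c k \<omega>" if "\<And>i. i < k \<Longrightarrow> c i < 2 ^ i" for c k
      unfolding P_def F_def using pos that by (intro prod_ennreal[symmetric]) (auto intro: less_imp_le)
    define X where "X = P (\<lambda>i. j div 2 ^ (m - i)) m \<omega>"
    define S where "S = (\<Sum>K\<in>B. P (\<lambda>i. K div 2 ^ (n - i)) n \<omega>)"
    have XS: "0 \<le> X" "0 \<le> S"
      unfolding X_def S_def using P_nonneg prefix block by (auto intro!: sum_nonneg)
    have "block_mass (\<lambda>p. W p \<omega>) m n j powr s \<le> a * X + b * S"
      using block_mass_powr_le[OF mn j s, of "\<lambda>p. W p \<omega>"] pos
      unfolding a_def b_def B_def X_def S_def P_def by simp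
    then have "ennreal (block_mass (\<lambda>p. W p \<omega>) m n j powr s) \<le> ennreal (a * X + b * S)"
      by (rule ennreal_leI)
    also have "\<dots> = ennreal a * ennreal X + ennreal b * ennreal S"
      using ab XS by (simp add: ennreal_plus ennreal_mult)
    also have "\<dots> = ennreal a * F (\<lambda>i. j div 2 ^ (m - i)) m \<omega> + ennreal b * (\<Sum>K\<in>B. F (\<lambda>i. K div 2 ^ (n - i)) n \<omega>)"
      unfolding X_def S_def using P_nonneg ennreal_P prefix block
      by (subst sum_ennreal[symmetric]) (auto intro!: sum.cong)
    finally show "ennreal (block_mass (\<lambda>p. W p \<omega>) m n j powr s)
        \<le> ennreal a * F (\<lambda>i. j div 2 ^ (m - i)) m \<omega> + ennreal b * (\<Sum>K\<in>B. F (\<lambda>i. K div 2 ^ (n - i)) n \<omega>)" .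
  qed
  have "(\<integral>\<^sup>+\<omega>. ennreal (block_mass (\<lambda>p. W p \<omega>) m n j powr s) \<partial>M)
      \<le> (\<integral>\<^sup>+\<omega>. ennreal a * F (\<lambda>i. j div 2 ^ (m - i)) m \<omega>
          + ennreal b * (\<Sum>K\<in>B. F (\<lambda>i. K div 2 ^ (n - i)) n \<omega>) \<partial>M)"
    by (rule nn_integral_mono_AE[OF bound])
  also have "\<dots> = ennreal a * (\<integral>\<^sup>+\<omega>. F (\<lambda>i. j div 2 ^ (m - i)) m \<omega> \<partial>M)
      + ennreal b * (\<Sum>K\<in>B. \<integral>\<^sup>+\<omega>. F (\<lambda>i. K div 2 ^ (n - i)) n \<omega> \<partial>M)"
    using F_measurable prefix block
    by (simp add: nn_integral_add nn_integral_cmult nn_integral_sum borel_measurable_sum)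
  also have "\<dots> = ennreal a * ennreal Es ^ m + ennreal b * (\<Sum>K\<in>B. ennreal Es ^ m)"
    using F_integral prefix block mn by simp
  also have "\<dots> = ennreal ((a + b * 2 ^ (n - m)) * Es ^ m)"
  proof -
    have "0 \<le> Es"
      unfolding Es_def by (simp add: integral_nonneg)
    then have "ennreal a * ennreal Es ^ m + ennreal b * (\<Sum>K\<in>B. ennreal Es ^ m)
        = ennreal (a * Es ^ m) + ennreal (b * 2 ^ (n - m) * Es ^ m)"
      using ab by (simp add: B_def ennreal_power ennreal_mult ennreal_of_nat_eq_real_of_nat mult.assoc)
    also have "\<dots> = ennreal ((a + b * 2 ^ (n - m)) * Es ^ m)"
      using ab \<open>0 \<le> Es\<close> by (simp add: ennreal_plus distrib_right)
    finally show ?thesis .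
  qed
  also have "a + b * 2 ^ (n - m) = (1 / 2 ^ m) powr s"
  proof -
    have "b * 2 ^ (n - m) = s * ((1 / 2 ^ m) powr (s - 1) * (1 / 2 ^ m))"
      using mn by (simp add: b_def power_diff field_simps)
    also have "\<dots> = s * (1 / 2 ^ m) powr s"
      by (simp add: powr_diff)
    finally show ?thesis
      by (simp add: a_def algebra_simps)
  qed
  finally show ?thesis
    by (simp add: Es_def)
qed

end

section \<open>Passage to the limit measure\<close>

lemma continuous_bump_exists:
  fixes a b L R :: real
  assumes "L < a" "b < R"
  obtains f :: "real \<Rightarrow> real" where "continuous_on UNIV f" "\<And>t. 0 \<le> f t" "\<And>t. f t \<le> 1"
    "\<And>t. t \<in> {a..b} \<Longrightarrow> f t = 1" "\<And>t. f t \<noteq> 0 \<Longrightarrow> t \<in> {L..R}"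
proof
  define \<delta> where "\<delta> = min (a - L) (R - b)"
  have \<delta>: "0 < \<delta>" "\<delta> \<le> a - L" "\<delta> \<le> R - b"
    using assms by (auto simp: \<delta>_def)
  define f where "f t = max 0 (min 1 (min ((t - L) / \<delta>) ((R - t) / \<delta>)))" for t
  show "continuous_on UNIV f"
    unfolding f_def using \<delta> by (intro continuous_intros) auto
  show "0 \<le> f t" "f t \<le> 1" for t
    by (auto simp: f_def)
  show "f t = 1" if "t \<in> {a..b}" for t
    using that \<delta> by (simp add: f_def le_divide_eq_1_pos)
  show "t \<in> {L..R}" if "f t \<noteq> 0" for t
  proof (rule ccontr)
    assume "t \<notin> {L..R}"
    then have "(t - L) / \<delta> < 0 \<or> (R - t) / \<delta> < 0"
      using \<delta> by (auto simp: divide_less_0_iff)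
    then show False
      using that by (auto simp: f_def)
  qed
qed

lemma (in finite_measure) measure_le_integral_dominating:
  fixes f :: "'a \<Rightarrow> real"
  assumes "A \<in> sets M" "f \<in> borel_measurable M"
    and "\<And>x. x \<in> space M \<Longrightarrow> indicator A x \<le> f x" "\<And>x. x \<in> space M \<Longrightarrow> f x \<le> 1"
  shows "measure M A \<le> (\<integral>x. f x \<partial>M)"
proof -
  have "\<And>x. x \<in> space M \<Longrightarrow> norm (f x) \<le> 1"
    using assms(3,4) by (smt (verit) indicator_pos_le real_norm_def)
  then have "integrable M f"
    using assms(2) by (intro integrable_const_bound[of _ 1]) auto
  then have "(\<integral>x. indicator A x \<partial>M) \<le> (\<integral>x. f x \<partial>M)"
    using assms by (intro integral_mono) (auto simp: emeasure_finite less_top[symmetric])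
  then show ?thesis
    using assms(1) sets.sets_into_space by (simp add: Int_absorb2)
qed

lemma cascade_weight_measurable: "cascade_weight W n \<omega> \<in> borel_measurable borel"
  unfolding cascade_weight_def[abs_def]
proof (rule borel_measurable_prod)
  fix j
  have "dyadic_index j \<in> measurable borel (count_space UNIV)"
    unfolding dyadic_index_def[abs_def] by measurable
  then show "(\<lambda>t. W (j, dyadic_index j t) \<omega>) \<in> borel_measurable borel"
    by (rule measurable_compose_countable[where f = "\<lambda>k t. W (j, k) \<omega>", rotated]) auto
qed

lemma nn_integral_cascade_measure_le_block_mass:
  fixes f :: "real \<Rightarrow> real"
  assumes mn: "m \<le> n" and \<alpha>\<beta>: "\<alpha> \<le> \<beta>" "\<beta> \<le> 2 ^ m"
    and W: "\<And>i k. k < 2 ^ i \<Longrightarrow> 0 \<le> W (i, k) \<omega>"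
    and f: "f \<in> borel_measurable borel" "\<And>t. f t \<le> 1"
    and supp: "\<And>t. t \<in> {0..1} \<Longrightarrow> f t \<noteq> 0 \<Longrightarrow> t \<in> {real \<alpha> / 2 ^ m..real \<beta> / 2 ^ m}"
  shows "(\<integral>\<^sup>+t. ennreal (f t) \<partial>cascade_measure W n \<omega>)
    \<le> ennreal (\<Sum>j\<in>{\<alpha>..<\<beta>}. block_mass (\<lambda>p. W p \<omega>) m n j)"
proof -
  define q :: nat where "q = 2 ^ (n - m)"
  have "(2::real) ^ n = 2 ^ m * real q"
    using mn by (simp add: q_def power_add[symmetric])
  then have scale: "real (c * q) / 2 ^ n = real c / 2 ^ m" for c
    by (simp add: q_def)
  have "(\<integral>\<^sup>+t. ennreal (f t) \<partial>cascade_measure W n \<omega>)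
      = (\<integral>\<^sup>+t. indicator {0..1} t * ennreal (cascade_weight W n \<omega> t) * ennreal (f t) \<partial>lborel)"
  proof -
    have "(\<lambda>t. indicator {0..1} t * ennreal (cascade_weight W n \<omega> t)) \<in> borel_measurable lborel"
      using cascade_weight_measurable[of W n \<omega>] by measurable
    then show ?thesis
      unfolding cascade_measure_def using f(1) by (subst nn_integral_density) auto
  qed
  also have "\<dots> \<le> (\<integral>\<^sup>+t. indicator {real (\<alpha> * q) / 2 ^ n..real (\<beta> * q) / 2 ^ n} t *
      ennreal (\<Prod>i<n. W (i, dyadic_index i t) \<omega>) \<partial>lborel)"
  proof (intro nn_integral_mono)
    fix t
    show "indicator {0..1} t * ennreal (cascade_weight W n \<omega> t) * ennreal (f t)
       \<le> indicator {real (\<alpha> * q) / 2 ^ n..real (\<beta> * q) / 2 ^ n} t * ennreal (\<Prod>i<n. W (i, dyadic_index i t) \<omega>)"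
    proof (cases "t \<in> {0..1} \<and> f t \<noteq> 0")
      case True
      then have "t \<in> {real (\<alpha> * q) / 2 ^ n..real (\<beta> * q) / 2 ^ n}"
        using supp scale by auto
      moreover have "ennreal (f t) \<le> 1"
        using f(2)[of t] by (simp add: ennreal_le_1)
      ultimately show ?thesis
        using True by (auto simp: cascade_weight_def intro: mult_left_le)
    qed auto
  qed
  also have "\<dots> \<le> (\<Sum>K\<in>{\<alpha> * q..<\<beta> * q}. ennreal ((\<Prod>i<n. W (i, K div 2 ^ (n - i)) \<omega>) / 2 ^ n))"
    using \<alpha>\<beta> by (intro nn_integral_dyadic_product_le) (simp add: mult_right_mono)
  also have "\<dots> = (\<Sum>j\<in>{\<alpha>..<\<beta>}. \<Sum>K\<in>{j * q..<(j + 1) * q}. ennreal ((\<Prod>i<n. W (i, K div 2 ^ (n - i)) \<omega>) / 2 ^ n))"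
    using \<alpha>\<beta>(1) by (rule sum_atLeastLessThan_group)
  also have "\<dots> = (\<Sum>j\<in>{\<alpha>..<\<beta>}. ennreal (block_mass (\<lambda>p. W p \<omega>) m n j))"
  proof (intro sum.cong refl)
    fix j assume "j \<in> {\<alpha>..<\<beta>}"
    then have "j < 2 ^ m" using \<alpha>\<beta> by auto
    then have "0 \<le> (\<Prod>i<n. W (i, K div 2 ^ (n - i)) \<omega>) / 2 ^ n" if "K \<in> {j * q..<(j + 1) * q}" for K
      using that block_less[of K j n m] mn W div_power2_less
      by (intro divide_nonneg_nonneg prod_nonneg) (auto simp: q_def)
    then show "(\<Sum>K\<in>{j * q..<(j + 1) * q}. ennreal ((\<Prod>i<n. W (i, K div 2 ^ (n - i)) \<omega>) / 2 ^ n))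
        = ennreal (block_mass (\<lambda>p. W p \<omega>) m n j)"
      unfolding block_mass_def q_def by (intro sum_ennreal) auto
  qed
  also have "\<dots> = ennreal (\<Sum>j\<in>{\<alpha>..<\<beta>}. block_mass (\<lambda>p. W p \<omega>) m n j)"
    using \<alpha>\<beta> mn W by (intro sum_ennreal block_mass_nonneg) auto
  finally show ?thesis .
qed

lemma measure_powr_le_liminf_block_mass:
  fixes W :: "nat \<times> nat \<Rightarrow> 'a \<Rightarrow> real" and \<nu> :: "real measure"
  assumes conv: "weak_conv_measures (\<lambda>n. cascade_measure W n \<omega>) \<nu>"
    and W: "\<And>i k. k < 2 ^ i \<Longrightarrow> 0 \<le> W (i, k) \<omega>"
    and \<alpha>\<beta>: "\<alpha> \<le> \<beta>" "\<beta> \<le> 2 ^ m"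
    and LR: "L < a" "b < R"
    and cover: "\<And>t. t \<in> {0..1} \<Longrightarrow> t \<in> {L..R} \<Longrightarrow> t \<in> {real \<alpha> / 2 ^ m..real \<beta> / 2 ^ m}"
    and s: "0 < s" "s \<le> 1"
  shows "ennreal (measure \<nu> {a..b} powr s)
    \<le> liminf (\<lambda>n. ennreal (\<Sum>j\<in>{\<alpha>..<\<beta>}. block_mass (\<lambda>p. W p \<omega>) m (n + m) j powr s))"
proof -
  obtain f :: "real \<Rightarrow> real" where f: "continuous_on UNIV f" "\<And>t. 0 \<le> f t" "\<And>t. f t \<le> 1"
    and f_ab: "\<And>t. t \<in> {a..b} \<Longrightarrow> f t = 1" and f_supp: "\<And>t. f t \<noteq> 0 \<Longrightarrow> t \<in> {L..R}"
    by (rule continuous_bump_exists[OF LR]) iprover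
  have f_measurable: "f \<in> borel_measurable borel"
    using f(1) by (rule borel_measurable_continuous_onI)
  have "bounded (range f)"
    by (rule bounded_subset[of "{0..1}"]) (use f(2,3) in auto)
  with conv f(1) have sets_\<nu>: "sets \<nu> = sets borel" and "finite_measure \<nu>"
    and lim: "(\<lambda>n. \<integral>t. f t \<partial>cascade_measure W n \<omega>) \<longlonglongrightarrow> (\<integral>t. f t \<partial>\<nu>)"
    unfolding weak_conv_measures_def by auto
  interpret \<nu>: finite_measure \<nu> by fact
  have measure_le: "measure \<nu> {a..b} \<le> (\<integral>t. f t \<partial>\<nu>)"
    using sets_\<nu> f f_ab f_measurable
    by (intro \<nu>.measure_le_integral_dominating) (auto simp: indicator_def measurable_cong_sets[OF sets_\<nu> refl])
  define F where "F n = (\<integral>t. f t \<partial>cascade_measure W n \<omega>)" for n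
  define S where "S n = (\<Sum>j\<in>{\<alpha>..<\<beta>}. block_mass (\<lambda>p. W p \<omega>) m n j)" for n
  have F_nonneg: "0 \<le> F n" for n
    unfolding F_def using f(2) by (intro integral_nonneg_AE) auto
  have F_le: "F n \<le> S n" if "m \<le> n" for n
  proof -
    have sets: "sets (cascade_measure W n \<omega>) = sets borel"
      by (simp add: cascade_measure_def)
    have "F n = enn2real (\<integral>\<^sup>+t. ennreal (f t) \<partial>cascade_measure W n \<omega>)"
      unfolding F_def using f(2) f_measurable
      by (subst integral_eq_nn_integral) (auto simp: measurable_cong_sets[OF sets refl])
    also have "\<dots> \<le> enn2real (ennreal (S n))"
      unfolding S_def using that \<alpha>\<beta> W f f_measurable f_supp cover
      by (intro enn2real_mono nn_integral_cascade_measure_le_block_mass) auto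
    also have "\<dots> = S n"
    proof -
      have "0 \<le> S n"
        unfolding S_def using that \<alpha>\<beta> W by (intro sum_nonneg block_mass_nonneg) auto
      then show ?thesis by simp
    qed
    finally show ?thesis .
  qed
  have "(\<lambda>n. ennreal (F (n + m) powr s)) \<longlonglongrightarrow> ennreal ((\<integral>t. f t \<partial>\<nu>) powr s)"
    using LIMSEQ_ignore_initial_segment[OF lim, of m] s F_nonneg
    by (intro tendsto_ennrealI tendsto_powr') (auto simp: F_def)
  then have "ennreal ((\<integral>t. f t \<partial>\<nu>) powr s) = liminf (\<lambda>n. ennreal (F (n + m) powr s))"
    by (intro lim_imp_Liminf[symmetric]) auto
  also have "\<dots> \<le> liminf (\<lambda>n. ennreal (\<Sum>j\<in>{\<alpha>..<\<beta>}. block_mass (\<lambda>p. W p \<omega>) m (n + m) j powr s))"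
  proof (intro Liminf_mono always_eventually allI ennreal_leI)
    fix n
    have "F (n + m) powr s \<le> S (n + m) powr s"
      using F_le F_nonneg s by (intro powr_mono2) auto
    also have "\<dots> \<le> (\<Sum>j\<in>{\<alpha>..<\<beta>}. block_mass (\<lambda>p. W p \<omega>) m (n + m) j powr s)"
      unfolding S_def using \<alpha>\<beta> W s by (intro powr_sum_le block_mass_nonneg) auto
    finally show "F (n + m) powr s \<le> (\<Sum>j\<in>{\<alpha>..<\<beta>}. block_mass (\<lambda>p. W p \<omega>) m (n + m) j powr s)" .
  qed
  finally show ?thesis
    using measure_le s by (meson ennreal_leI measure_nonneg order_trans powr_mono2 less_imp_le)
qed

lemma dyadic_cover_exists:
  fixes a b :: real
  assumes "0 \<le> a" "a \<le> 1" "b \<le> a + 1 / 2 ^ m"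
  obtains \<alpha> \<beta> :: nat and L R :: real where "\<alpha> \<le> \<beta>" "\<beta> \<le> 2 ^ m" "\<beta> \<le> \<alpha> + 3" "L < a" "b < R"
    "\<And>t. t \<in> {0..1} \<Longrightarrow> t \<in> {L..R} \<Longrightarrow> t \<in> {real \<alpha> / 2 ^ m..real \<beta> / 2 ^ m}"
proof
  define k where "k = nat \<lfloor>a * 2 ^ m\<rfloor>"
  have k: "real k \<le> a * 2 ^ m" "a * 2 ^ m < real k + 1"
    using assms(1) by (auto simp: k_def)
  have "a * 2 ^ m \<le> 2 ^ m"
    using assms(1,2) by (intro mult_left_le_one_le) auto
  then have "real k \<le> 2 ^ m"
    using k(1) by linarith
  then have "k \<le> 2 ^ m"
    by simp
  then show "k - 1 \<le> min (k + 2) (2 ^ m)" "min (k + 2) (2 ^ m) \<le> 2 ^ m"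
    "min (k + 2) (2 ^ m) \<le> k - 1 + 3"
    by auto
  show "(real k - 1) / 2 ^ m < a"
    using k by (simp add: field_simps)
  show "b < (real k + 2) / 2 ^ m"
    using k assms(3) by (simp add: field_simps)
  fix t :: real
  assume t: "t \<in> {0..1}" "t \<in> {(real k - 1) / 2 ^ m..(real k + 2) / 2 ^ m}"
  have "real (k - 1) / 2 ^ m \<le> t"
    using t by (cases "k = 0") (auto simp: of_nat_diff)
  moreover have "t \<le> real (min (k + 2) (2 ^ m)) / 2 ^ m"
    using t by (cases "k + 2 \<le> 2 ^ m") (auto simp: min_def add.commute)
  ultimately show "t \<in> {real (k - 1) / 2 ^ m..real (min (k + 2) (2 ^ m)) / 2 ^ m}"
    by simp
qed

context cascade_weights
begin

lemma nn_integral_measure_interval_powr_le: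
  fixes \<mu> :: "'a \<Rightarrow> real measure"
  assumes conv: "AE \<omega> in M. weak_conv_measures (\<lambda>n. cascade_measure W n \<omega>) (\<mu> \<omega>)"
    and xy: "x \<in> {0..1}" "y \<in> {0..1}" "\<bar>x - y\<bar> \<le> 1 / 2 ^ m" and s: "0 < s" "s \<le> 1"
  shows "(\<integral>\<^sup>+\<omega>. ennreal (measure (\<mu> \<omega>) {min x y..max x y} powr s) \<partial>M)
    \<le> ennreal (3 * ((1 / 2 ^ m) powr s * (\<integral>\<omega>. W0 \<omega> powr s \<partial>M) ^ m))"
proof -
  have "0 \<le> min x y" "min x y \<le> 1" "max x y \<le> min x y + 1 / 2 ^ m"
    using xy by auto
  then obtain \<alpha> \<beta> :: nat and L R :: real where \<alpha>\<beta>: "\<alpha> \<le> \<beta>" "\<beta> \<le> 2 ^ m" "\<beta> \<le> \<alpha> + 3"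
    and LR: "L < min x y" "max x y < R"
    and cover: "\<And>t. t \<in> {0..1} \<Longrightarrow> t \<in> {L..R} \<Longrightarrow> t \<in> {real \<alpha> / 2 ^ m..real \<beta> / 2 ^ m}"
    by (rule dyadic_cover_exists) iprover
  define bound where "bound = (1 / 2 ^ m) powr s * (\<integral>\<omega>. W0 \<omega> powr s \<partial>M) ^ m"
  define G where "G n \<omega> = ennreal (\<Sum>j\<in>{\<alpha>..<\<beta>}. block_mass (\<lambda>p. W p \<omega>) m (n + m) j powr s)" for n \<omega>
  have block_measurable: "(\<lambda>\<omega>. ennreal (block_mass (\<lambda>p. W p \<omega>) m (n + m) j powr s)) \<in> borel_measurable M"
    if "j \<in> {\<alpha>..<\<beta>}" for n j
  proof -
    have "(\<lambda>\<omega>. block_mass (\<lambda>p. W p \<omega>) m (n + m) j) \<in> borel_measurable M"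
      using that \<alpha>\<beta> by (intro block_mass_measurable) auto
    then show ?thesis by measurable
  qed
  have "(\<integral>\<^sup>+\<omega>. ennreal (measure (\<mu> \<omega>) {min x y..max x y} powr s) \<partial>M) \<le> (\<integral>\<^sup>+\<omega>. liminf (\<lambda>n. G n \<omega>) \<partial>M)"
  proof (intro nn_integral_mono_AE eventually_mono[OF AE_conjI[OF conv AE_W_pos]])
    fix \<omega>
    assume "weak_conv_measures (\<lambda>n. cascade_measure W n \<omega>) (\<mu> \<omega>) \<and> (\<forall>n k. k < 2 ^ n \<longrightarrow> 0 < W (n, k) \<omega>)"
    then show "ennreal (measure (\<mu> \<omega>) {min x y..max x y} powr s) \<le> liminf (\<lambda>n. G n \<omega>)"
      unfolding G_def using \<alpha>\<beta> LR cover s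
      by (intro measure_powr_le_liminf_block_mass[where L = L and R = R]) (auto intro: less_imp_le)
  qed
  also have "\<dots> \<le> liminf (\<lambda>n. \<integral>\<^sup>+\<omega>. G n \<omega> \<partial>M)"
    unfolding G_def using block_measurable
    by (intro nn_integral_liminf) (simp add: sum_ennreal[symmetric] del: sum_ennreal)
  also have "\<dots> \<le> ennreal (3 * bound)"
  proof (intro Liminf_le always_eventually allI)
    fix n
    have "(\<integral>\<^sup>+\<omega>. G n \<omega> \<partial>M) = (\<integral>\<^sup>+\<omega>. (\<Sum>j\<in>{\<alpha>..<\<beta>}. ennreal (block_mass (\<lambda>p. W p \<omega>) m (n + m) j powr s)) \<partial>M)"
      unfolding G_def by (intro nn_integral_cong) simp
    also have "\<dots> = (\<Sum>j\<in>{\<alpha>..<\<beta>}. \<integral>\<^sup>+\<omega>. ennreal (block_mass (\<lambda>p. W p \<omega>) m (n + m) j powr s) \<partial>M)"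
      by (rule nn_integral_sum) (rule block_measurable)
    also have "\<dots> \<le> (\<Sum>j\<in>{\<alpha>..<\<beta>}. ennreal bound)"
      unfolding bound_def using \<alpha>\<beta> s by (intro sum_mono nn_integral_block_mass_powr) auto
    also have "\<dots> = of_nat (\<beta> - \<alpha>) * ennreal bound"
      by simp
    also have "\<dots> \<le> of_nat 3 * ennreal bound"
      using \<alpha>\<beta> by (intro mult_right_mono of_nat_mono) auto
    also have "\<dots> = ennreal (3 * bound)"
      by (simp add: ennreal_mult')
    finally show "(\<integral>\<^sup>+\<omega>. G n \<omega> \<partial>M) \<le> ennreal (3 * bound)" .
  qed simp
  finally show ?thesis
    by (simp add: bound_def)
qed

lemma cascade_exponent_bounds:
  assumes "0 < s" "s \<le> 1"
    and "integrable M (\<lambda>\<omega>. W0 \<omega> * log 2 (W0 \<omega>))" "(\<integral>\<omega>. W0 \<omega> * log 2 (W0 \<omega>) \<partial>M) < 1"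
  shows "0 < (\<integral>\<omega>. W0 \<omega> powr s \<partial>M)" "s \<le> s - log 2 (\<integral>\<omega>. W0 \<omega> powr s \<partial>M)"
    "s - log 2 (\<integral>\<omega>. W0 \<omega> powr s \<partial>M) \<le> 1"
proof -
  have lower: "2 powr (s - 1) \<le> (\<integral>\<omega>. W0 \<omega> powr s \<partial>M)"
    using assms by (rule moment_W0_powr_ge)
  show pos: "0 < (\<integral>\<omega>. W0 \<omega> powr s \<partial>M)"
    by (rule order_less_le_trans[OF _ lower]) simp
  show "s \<le> s - log 2 (\<integral>\<omega>. W0 \<omega> powr s \<partial>M)"
    using moment_W0_powr_le_one[OF assms(1,2)] pos by simp
  have "log 2 (2 powr (s - 1)) \<le> log 2 (\<integral>\<omega>. W0 \<omega> powr s \<partial>M)"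
    using lower pos by (subst log_le_cancel_iff) auto
  then show "s - log 2 (\<integral>\<omega>. W0 \<omega> powr s \<partial>M) \<le> 1"
    by simp
qed

end

theorem lemma3p3:
  fixes M :: "'a measure"
    and W0 :: "'a \<Rightarrow> real"
    and W :: "nat \<times> nat \<Rightarrow> 'a \<Rightarrow> real"
    and \<mu> :: "'a \<Rightarrow> real measure"
    and x y s :: real
  assumes "prob_space M"
    and "W0 \<in> borel_measurable M"
    and "prob_space.indep_vars M (\<lambda>_. borel) W {(n, k). k < 2 ^ n}"
    and "\<And>n k. k < 2 ^ n \<Longrightarrow> distr M borel (W (n, k)) = distr M borel W0"
    and "AE \<omega> in M. W0 \<omega> > 0"
    and "integrable M W0" and "(\<integral>\<omega>. W0 \<omega> \<partial>M) = 1"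
    and "integrable M (\<lambda>\<omega>. W0 \<omega> * log 2 (W0 \<omega>))"
    and "(\<integral>\<omega>. W0 \<omega> * log 2 (W0 \<omega>) \<partial>M) < 1"
    and "AE \<omega> in M. weak_conv_measures (\<lambda>n. cascade_measure W n \<omega>) (\<mu> \<omega>)"
    and "x \<in> {0..1}" and "y \<in> {0..1}" and "s \<in> {0<..1}"
  shows "(\<integral>\<^sup>+\<omega>. ennreal (measure (\<mu> \<omega>) {min x y..max x y} powr s) \<partial>M)
           \<le> ennreal (8 * \<bar>x - y\<bar> powr (s - log 2 (\<integral>\<omega>. W0 \<omega> powr s \<partial>M)))"
proof -
  interpret cascade_weights M W0 W
    using assms(1-7) by (simp add: cascade_weights_def cascade_weights_axioms_def)
  have s: "0 < s" "s \<le> 1"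
    using assms(13) by auto
  note exponent = cascade_exponent_bounds[OF s assms(8,9)]
  have "0 < s - log 2 (\<integral>\<omega>. W0 \<omega> powr s \<partial>M)"
    using exponent(2) s(1) by linarith
  show ?thesis
  proof (rule dyadic_scale_bound)
    fix m :: nat
    assume "\<bar>x - y\<bar> \<le> 1 / 2 ^ m"
    with nn_integral_measure_interval_powr_le[OF assms(10-12) this s] show
      "(\<integral>\<^sup>+\<omega>. ennreal (measure (\<mu> \<omega>) {min x y..max x y} powr s) \<partial>M)
        \<le> ennreal (3 * (1 / 2 ^ m) powr (s - log 2 (\<integral>\<omega>. W0 \<omega> powr s \<partial>M)))"
      by (simp add: powr_mult_power_eq_powr[OF exponent(1)])
  qed (use \<open>0 < s - log 2 _\<close> exponent(3) assms(11,12) in auto)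
qed

end
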